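(* Let $n\ge1$ and let $X,Y$ be distinct elements of the group completion $K(\widetilde{Sp}(\mathbb{R}^n\times\mathbb{R}^n))$. Then there exists $(\mathbf a,\mathbf b)\in\mathbb{N}_+^n\times\mathbb{N}^n$ with $\varphi_X(p_{\mathbf a,\mathbf b})\neq\varphi_Y(p_{\mathbf a,\mathbf b})$.
   Context: A pair $(\mathbf z,\mathbf z')\in\mathbb{R}^n\times\mathbb{R}^n$ is degenerate if $z_j=z'_j$ for some $j$. $\widetilde{Sp}(\mathbb{R}^n\times\mathbb{R}^n)$ is the commutative monoid (under multiset union) of finite multisets of points of $\mathbb{R}^n\times\mathbb{R}^n$ modulo the equivalence relation generated by adding or removing degenerate pairs. Its group completion $K(\widetilde{Sp}(\mathbb{R}^n\times\mathbb{R}^n))$ consists of pairs $(X_+,X_-)$ modulo $(X_+,X_-)\sim(Y_+,Y_-)$ iff $X_++Y_-=Y_++X_-$. For $\mathbf a\in\mathbb{N}_+^n$ (all $a_j\ge1$), $\mathbf b\in\mathbb{N}^n$ and a multiset $X=\{(\mathbf x_i,\mathbf y_i)\}_{i=1}^r$, $p_{\mathbf a,\mathbf b}(X)=\sum_{i=1}^r\prod_{j=1}^n(y_{ij}-x_{ij})^{a_j}(y_{ij}+x_{ij})^{b_j}$, which is well defined on $\widetilde{Sp}$. For $X=(X_+,X_-)$, $\varphi_X(p_{\mathbf a,\mathbf b})=p_{\mathbf a,\mathbf b}(X_+)-p_{\mathbf a,\mathbf b}(X_-)$ (well defined on classes). *)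

theory Defs
  imports "HOL-Analysis.Analysis" "HOL-Library.Multiset"
begin

type_synonym 'n pt = "(real ^ 'n) \<times> (real ^ 'n)"

definition degenerate :: "'n::finite pt \<Rightarrow> bool" where
  "degenerate zz \<longleftrightarrow> (\<exists>j. fst zz $ j = snd zz $ j)"

definition sp_step :: "'n::finite pt multiset \<Rightarrow> 'n pt multiset \<Rightarrow> bool" where
  "sp_step A B \<longleftrightarrow> (\<exists>d. degenerate d \<and> (B = A + {#d#} \<or> A = B + {#d#}))"

text \<open>Equality in the monoid Sp~: the equivalence relation generated by the moves
  (the step relation is symmetric, so its reflexive-transitive closure is the generated equivalence).\<close>
definition sp_eq :: "'n::finite pt multiset \<Rightarrow> 'n pt multiset \<Rightarrow> bool" where
  "sp_eq = sp_step\<^sup>*\<^sup>*"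

text \<open>Equality in the group completion K: (P1,N1) ~ (P2,N2) iff P1 + N2 = P2 + N1 in Sp~.\<close>
definition K_eq :: "'n::finite pt multiset \<times> 'n pt multiset \<Rightarrow> 'n pt multiset \<times> 'n pt multiset \<Rightarrow> bool" where
  "K_eq X Y \<longleftrightarrow> sp_eq (fst X + snd Y) (fst Y + snd X)"

definition p_ab :: "nat ^ 'n \<Rightarrow> nat ^ 'n \<Rightarrow> 'n::finite pt multiset \<Rightarrow> real" where
  "p_ab a b X = (\<Sum>\<^sub># (image_mset (\<lambda>(x, y). \<Prod>j\<in>UNIV. (y $ j - x $ j) ^ (a $ j) * (y $ j + x $ j) ^ (b $ j)) X))"

definition phi :: "'n::finite pt multiset \<times> 'n pt multiset \<Rightarrow> nat ^ 'n \<Rightarrow> nat ^ 'n \<Rightarrow> real" where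
  "phi X a b = p_ab a b (fst X) - p_ab a b (snd X)"

end

theory Submission
  imports Defs
begin

text \<open>Write \<open>u\<^sub>k = y\<^sub>k - x\<^sub>k\<close> and \<open>v\<^sub>k = y\<^sub>k + x\<^sub>k\<close>. If two multisets have the same
  moments \<open>\<Sum> u\<^sup>a v\<^sup>b\<close> for all \<open>a \<ge> 1\<close>, they also have the same moments weighted by any
  polynomial in the \<open>u\<^sub>k, v\<^sub>k\<close>, since multiplying by \<open>u\<^sub>k\<close> or \<open>v\<^sub>k\<close> only raises an exponent.
  Weighting by a product of affine functions that vanish at every point of the two multisets
  except a given one \<open>p\<^sub>0\<close> isolates the multiplicities of \<open>p\<^sub>0\<close>; the weight \<open>u\<^sub>1\<cdots>u\<^sub>n\<close> is
  nonzero at \<open>p\<^sub>0\<close> exactly when \<open>p\<^sub>0\<close> is non-degenerate. Hence the two multisets agree up to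
  degenerate pairs, which is equality in \<open>Sp~\<close>.\<close>

definition sp_monomial :: "nat ^ 'n \<Rightarrow> nat ^ 'n \<Rightarrow> 'n::finite pt \<Rightarrow> real" where
  "sp_monomial a b = (\<lambda>(x, y). \<Prod>j\<in>UNIV. (y $ j - x $ j) ^ (a $ j) * (y $ j + x $ j) ^ (b $ j))"

lemma p_ab_eq_sum_sp_monomial: "p_ab a b X = (\<Sum>p\<in>#X. sp_monomial a b p)"
  unfolding p_ab_def sp_monomial_def ..

lemma p_ab_union: "p_ab a b (A + B) = p_ab a b A + p_ab a b B"
  unfolding p_ab_def by simp

lemma prod_UNIV_times_at:
  fixes h :: "'n::finite \<Rightarrow> 'a::comm_monoid_mult"
  shows "(\<Prod>j\<in>UNIV. h j * (if j = k then c else 1)) = (\<Prod>j\<in>UNIV. h j) * c"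
  by (simp add: prod.distrib prod.delta')

lemma sp_monomial_times_diff:
  "sp_monomial a b p * (snd p $ k - fst p $ k)
     = sp_monomial (\<chi> j. if j = k then a $ j + 1 else a $ j) b p"
proof (cases p)
  case (Pair x y)
  have "sp_monomial (\<chi> j. if j = k then a $ j + 1 else a $ j) b p
      = (\<Prod>j\<in>UNIV. (y $ j - x $ j) ^ (a $ j) * (y $ j + x $ j) ^ (b $ j)
                       * (if j = k then y $ k - x $ k else 1))"
    unfolding sp_monomial_def Pair by (simp, intro prod.cong) auto
  then show ?thesis
    unfolding prod_UNIV_times_at by (simp add: sp_monomial_def Pair)
qed

lemma sp_monomial_times_sum:
  "sp_monomial a b p * (snd p $ k + fst p $ k)
     = sp_monomial a (\<chi> j. if j = k then b $ j + 1 else b $ j) p"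
proof (cases p)
  case (Pair x y)
  have "sp_monomial a (\<chi> j. if j = k then b $ j + 1 else b $ j) p
      = (\<Prod>j\<in>UNIV. (y $ j - x $ j) ^ (a $ j) * (y $ j + x $ j) ^ (b $ j)
                       * (if j = k then y $ k + x $ k else 1))"
    unfolding sp_monomial_def Pair by (simp, intro prod.cong) auto
  then show ?thesis
    unfolding prod_UNIV_times_at by (simp add: sp_monomial_def Pair)
qed

definition weighted_moments_agree ::
    "('n::finite pt \<Rightarrow> real) \<Rightarrow> 'n pt multiset \<Rightarrow> 'n pt multiset \<Rightarrow> bool" where
  "weighted_moments_agree w A B \<longleftrightarrow> (\<forall>a b. (\<forall>j. 1 \<le> a $ j) \<longrightarrow>
     (\<Sum>p\<in>#A. sp_monomial a b p * w p) = (\<Sum>p\<in>#B. sp_monomial a b p * w p))"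

lemma weighted_moments_agree_one_iff:
  "weighted_moments_agree (\<lambda>_. 1) A B \<longleftrightarrow>
     (\<forall>a b. (\<forall>j. 1 \<le> a $ j) \<longrightarrow> p_ab a b A = p_ab a b B)"
  unfolding weighted_moments_agree_def p_ab_eq_sum_sp_monomial by simp

lemma sum_mset_minus_scaled:
  fixes f g :: "'a \<Rightarrow> 'b::comm_ring"
  shows "(\<Sum>p\<in>#A. f p - c * g p) = (\<Sum>p\<in>#A. f p) - c * (\<Sum>p\<in>#A. g p)"
  by (induction A) (simp_all add: algebra_simps)

lemma weighted_moments_agree_diff:
  assumes "weighted_moments_agree w A B" "weighted_moments_agree w' A B"
  shows "weighted_moments_agree (\<lambda>p. w p - c * w' p) A B"
  using assms unfolding weighted_moments_agree_def
  by (simp add: right_diff_distrib mult.left_commute[of _ c] sum_mset_minus_scaled)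

lemma weighted_moments_agree_times_diff:
  assumes "weighted_moments_agree w A B"
  shows "weighted_moments_agree (\<lambda>p. w p * (snd p $ k - fst p $ k)) A B"
  using assms unfolding weighted_moments_agree_def
  by (simp add: mult.assoc[symmetric] mult.commute[of "w _"] sp_monomial_times_diff)

lemma weighted_moments_agree_times_sum:
  assumes "weighted_moments_agree w A B"
  shows "weighted_moments_agree (\<lambda>p. w p * (snd p $ k + fst p $ k)) A B"
  using assms unfolding weighted_moments_agree_def
  by (simp add: mult.assoc[symmetric] mult.commute[of "w _"] sp_monomial_times_sum)

definition coordinate_separators :: "('n::finite pt \<Rightarrow> real) set" where
  "coordinate_separators =
     range (\<lambda>(k, c) p. snd p $ k - fst p $ k - c) \<union> range (\<lambda>(k, c) p. snd p $ k + fst p $ k - c)"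

lemma weighted_moments_agree_times_separator:
  assumes agree: "weighted_moments_agree w A B" and "f \<in> coordinate_separators"
  shows "weighted_moments_agree (\<lambda>p. w p * f p) A B"
proof -
  obtain k c where "f = (\<lambda>p. snd p $ k - fst p $ k - c) \<or> f = (\<lambda>p. snd p $ k + fst p $ k - c)"
    using assms(2) unfolding coordinate_separators_def by auto
  then show ?thesis
    using weighted_moments_agree_diff[OF weighted_moments_agree_times_diff[OF agree] agree]
      weighted_moments_agree_diff[OF weighted_moments_agree_times_sum[OF agree] agree]
    by (auto simp: right_diff_distrib mult.commute)
qed

lemma weighted_moments_agree_prod_separators:
  assumes "weighted_moments_agree (\<lambda>_. 1) A B" "finite T" "L ` T \<subseteq> coordinate_separators"
  shows "weighted_moments_agree (\<lambda>p. \<Prod>t\<in>T. L t p) A B"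
  using assms(2,3)
proof (induction T rule: finite_induct)
  case empty
  then show ?case using assms(1) by simp
next
  case (insert t T)
  then have "weighted_moments_agree (\<lambda>p. (\<Prod>t\<in>T. L t p) * L t p) A B"
    by (intro weighted_moments_agree_times_separator) auto
  then show ?case using insert by (simp add: mult.commute)
qed

lemma coordinate_separator_exists:
  assumes "p \<noteq> p0"
  obtains f where "f \<in> coordinate_separators" "f p = 0" "f p0 \<noteq> 0"
proof -
  obtain k where k: "fst p $ k \<noteq> fst p0 $ k \<or> snd p $ k \<noteq> snd p0 $ k"
    using assms by (metis prod_eq_iff vec_eq_iff)
  show ?thesis
  proof (cases "snd p $ k - fst p $ k = snd p0 $ k - fst p0 $ k")
    case True
    with k have "snd p $ k + fst p $ k \<noteq> snd p0 $ k + fst p0 $ k" by auto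
    then show ?thesis
      by (intro that[of "\<lambda>q. snd q $ k + fst q $ k - (snd p $ k + fst p $ k)"])
         (auto simp: coordinate_separators_def)
  next
    case False
    then show ?thesis
      by (intro that[of "\<lambda>q. snd q $ k - fst q $ k - (snd p $ k - fst p $ k)"])
         (auto simp: coordinate_separators_def)
  qed
qed

lemma sum_mset_vanishing_off_point:
  assumes "\<forall>p\<in>#A. p \<noteq> p0 \<longrightarrow> g p = 0"
  shows "(\<Sum>p\<in>#A. g p) = of_nat (count A p0) * g p0"
  using assms by (induction A) (auto simp: algebra_simps)

lemma sp_monomial_nonzero_if_nondegenerate:
  assumes "\<not> degenerate p"
  shows "sp_monomial (\<chi> j. 1) 0 p \<noteq> 0"
  using assms unfolding sp_monomial_def degenerate_def by (cases p) (auto, metis)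

lemma count_eq_if_moments_agree:
  fixes A B :: "'n::finite pt multiset"
  assumes agree: "weighted_moments_agree (\<lambda>_. 1) A B" and "\<not> degenerate p0"
  shows "count A p0 = count B p0"
proof -
  define T where "T = set_mset (A + B) - {p0}"
  have "\<forall>t\<in>T. \<exists>f. f \<in> coordinate_separators \<and> f t = 0 \<and> f p0 \<noteq> 0"
  proof
    fix t assume "t \<in> T"
    then have "t \<noteq> p0" unfolding T_def by simp
    then obtain f where "f \<in> coordinate_separators" "f t = 0" "f p0 \<noteq> 0"
      by (rule coordinate_separator_exists)
    then show "\<exists>f. f \<in> coordinate_separators \<and> f t = 0 \<and> f p0 \<noteq> 0" by blast
  qed
  from bchoice[OF this]
  obtain L where L: "\<forall>t\<in>T. L t \<in> coordinate_separators \<and> L t t = 0 \<and> L t p0 \<noteq> 0"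
    by blast
  define g where "g p = (\<Prod>t\<in>T. L t p)" for p
  define m :: "'n pt \<Rightarrow> real" where "m = sp_monomial (\<chi> j. 1) 0"
  have fin: "finite T" unfolding T_def by simp
  have vanish: "g p = 0" if "p \<in># A + B" "p \<noteq> p0" for p
  proof -
    have "p \<in> T" using that unfolding T_def by simp
    with L fin show ?thesis unfolding g_def by (auto simp: prod_zero_iff)
  qed
  have "weighted_moments_agree g A B"
    unfolding g_def using L by (intro weighted_moments_agree_prod_separators[OF agree fin]) auto
  then have "(\<Sum>p\<in>#A. m p * g p) = (\<Sum>p\<in>#B. m p * g p)"
    unfolding weighted_moments_agree_def m_def by simp
  moreover have "(\<Sum>p\<in>#C. m p * g p) = real (count C p0) * (m p0 * g p0)"
    if "C = A \<or> C = B" for C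
    using that vanish by (intro sum_mset_vanishing_off_point) auto
  moreover have "g p0 \<noteq> 0" unfolding g_def using L fin by simp
  moreover have "m p0 \<noteq> 0"
    unfolding m_def using sp_monomial_nonzero_if_nondegenerate[OF assms(2)] .
  ultimately show ?thesis by simp
qed

lemma sp_eq_add_right:
  assumes "sp_eq A B"
  shows "sp_eq (A + C) (B + C)"
  using assms unfolding sp_eq_def
proof (induction rule: rtranclp_induct)
  case (step D D')
  from \<open>sp_step D D'\<close> obtain d where "degenerate d" "D' = D + {#d#} \<or> D = D' + {#d#}"
    unfolding sp_step_def by blast
  then have "sp_step (D + C) (D' + C)"
    unfolding sp_step_def by (intro exI[of _ d]) (auto simp: ac_simps)
  with step.IH show ?case by (rule rtranclp.rtrancl_into_rtrancl)
qed simp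

lemma sp_eq_sym:
  assumes "sp_eq A B"
  shows "sp_eq B A"
proof -
  have "symp sp_step" unfolding symp_def sp_step_def by blast
  with assms show ?thesis unfolding sp_eq_def by (metis sympD symp_rtranclp)
qed

lemma sp_eq_filter_nondegenerate: "sp_eq A (filter_mset (\<lambda>d. \<not> degenerate d) A)"
proof (induction A)
  case empty
  then show ?case unfolding sp_eq_def by simp
next
  case (add d A)
  show ?case
  proof (cases "degenerate d")
    case True
    then have "sp_step (add_mset d A) A" unfolding sp_step_def by (intro exI[of _ d]) simp
    with add.IH True show ?thesis
      unfolding sp_eq_def by (simp add: converse_rtranclp_into_rtranclp)
  next
    case False
    with sp_eq_add_right[OF add.IH, of "{#d#}"] show ?thesis by simp
  qed
qed

lemma sp_eq_if_moments_agree: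
  assumes "weighted_moments_agree (\<lambda>_. 1) A B"
  shows "sp_eq A B"
proof -
  have "filter_mset (\<lambda>d. \<not> degenerate d) A = filter_mset (\<lambda>d. \<not> degenerate d) B"
    using count_eq_if_moments_agree[OF assms] by (auto simp: multiset_eq_iff)
  then show ?thesis
    using sp_eq_filter_nondegenerate[of A] sp_eq_sym[OF sp_eq_filter_nondegenerate[of B]]
    unfolding sp_eq_def by (metis rtranclp_trans)
qed

theorem lemma4p7:
  fixes X Y :: "'n::finite pt multiset \<times> 'n pt multiset"
  assumes "\<not> K_eq X Y"
  shows "\<exists>a b :: nat ^ 'n. (\<forall>j. a $ j \<ge> 1) \<and> phi X a b \<noteq> phi Y a b"
proof (rule ccontr)
  assume "\<not> ?thesis"
  then have "\<forall>a b :: nat ^ 'n. (\<forall>j. 1 \<le> a $ j) \<longrightarrow>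
      p_ab a b (fst X + snd Y) = p_ab a b (fst Y + snd X)"
    unfolding phi_def p_ab_union by (auto simp: algebra_simps)
  then have "sp_eq (fst X + snd Y) (fst Y + snd X)"
    by (intro sp_eq_if_moments_agree) (simp add: weighted_moments_agree_one_iff)
  with assms show False unfolding K_eq_def by simp
qed

end
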